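(* Let $K\ge1$, $x_1,\dots,x_n\in\mathbb{R}^p$, $\mathsf y_1,\dots,\mathsf y_n\in\mathbb{R}^{K+1}$, and suppose a minimizer $\hat{\mathsf B}$ of $\sum_i\mathcal L_i(\mathsf B^Tx_i)$ over $\mathsf B\in\mathbb{R}^{p\times(K+1)}$ exists and that $\sum_{l=1}^nH_l\otimes(x_lx_l^T)$ is invertible, where $\hat B=\hat{\mathsf B}Q$. Then $V_i=Q^T\mathsf V_iQ$ for every $i\in[n]$.
   Context: $Q\in\mathbb{R}^{(K+1)\times K}$ satisfies $QQ^T=I_{K+1}-\frac{1}{K+1}\mathbf 1\mathbf 1^T$, $Q^TQ=I_K$. $\mathcal L_i(u)=-\sum_k\mathsf y_{ik}u_k+\log\sum_{k'}e^{u_{k'}}$. $\hat{\mathsf p}_{ik}=\exp(x_i^T\hat{\mathsf B}e_k)/\sum_{k'}\exp(x_i^T\hat{\mathsf B}e_{k'})$, $\mathsf H_i=\operatorname{diag}(\hat{\mathsf p}_i)-\hat{\mathsf p}_i\hat{\mathsf p}_i^T$, $\mathsf V_i=\mathsf H_i-(\mathsf H_i\otimes x_i^T)[\sum_l\mathsf H_l\otimes(x_lx_l^T)]^\dagger(\mathsf H_i\otimes x_i)$ ($\dagger$ = Moore–Penrose inverse). $H_i=Q^T\mathsf H_iQ$ (the Hessian of $u\mapsto\mathcal L_i(Qu)$ at $\hat B^Tx_i$), $V_i=H_i-(H_i\otimes x_i^T)[\sum_lH_l\otimes(x_lx_l^T)]^{-1}(H_i\otimes x_i)$. *)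

theory Defs
  imports Complex_Main "Jordan_Normal_Form.Matrix" "Jordan_Normal_Form.Gauss_Jordan_Elimination"
begin

definition kron :: "real mat \<Rightarrow> real mat \<Rightarrow> real mat" where
  "kron A B = mat (dim_row A * dim_row B) (dim_col A * dim_col B)
     (\<lambda>(i,j). A $$ (i div dim_row B, j div dim_col B) * B $$ (i mod dim_row B, j mod dim_col B))"

definition msum :: "nat \<Rightarrow> nat \<Rightarrow> ('i \<Rightarrow> real mat) \<Rightarrow> 'i set \<Rightarrow> real mat" where
  "msum nr nc f I = mat nr nc (\<lambda>ij. \<Sum>l\<in>I. f l $$ ij)"

definition pinv :: "real mat \<Rightarrow> real mat" where
  "pinv A = (THE X. X \<in> carrier_mat (dim_col A) (dim_row A) \<and> A * X * A = A \<and> X * A * X = X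
              \<and> transpose_mat (A * X) = A * X \<and> transpose_mat (X * A) = X * A)"

definition colm :: "real vec \<Rightarrow> real mat" where
  "colm v = mat (dim_vec v) 1 (\<lambda>(i,j). v $ i)"
definition rowm :: "real vec \<Rightarrow> real mat" where
  "rowm v = mat 1 (dim_vec v) (\<lambda>(i,j). v $ j)"

definition mlloss :: "real vec \<Rightarrow> real vec \<Rightarrow> real" where
  "mlloss y u = - (\<Sum>k<dim_vec u. y $ k * u $ k) + ln (\<Sum>k<dim_vec u. exp (u $ k))"

definition phat :: "real mat \<Rightarrow> real vec \<Rightarrow> nat \<Rightarrow> real" where
  "phat B x k = exp (x \<bullet> col B k) / (\<Sum>k'<dim_col B. exp (x \<bullet> col B k'))"

definition Hsf :: "real mat \<Rightarrow> real vec \<Rightarrow> real mat" where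
  "Hsf B x = mat (dim_col B) (dim_col B)
     (\<lambda>(a,b). (if a = b then phat B x a else 0) - phat B x a * phat B x b)"

end

(* Let P = Q \<otimes> I_p; then P^T P = I because Q^T Q = I. Every Hsf_l has zero row and
   column sums, so it is fixed on both sides by the centering projection Q Q^T, i.e.
   Hsf_l = Q H_l Q^T. Hence sum_l Hsf_l \<otimes> x_l x_l^T = P M P^T with
   M = sum_l H_l \<otimes> x_l x_l^T, and for invertible M the Moore-Penrose inverse of P M P^T is
   P M^-1 P^T: each Penrose condition reduces to P^T P = I. Finally
   Q^T (Hsf_i \<otimes> x_i^T) P = H_i \<otimes> x_i^T and P^T (Hsf_i \<otimes> x_i) Q = H_i \<otimes> x_i, which turns
   Q^T Vsf_i Q into V_i. *)

theory Submission
  imports Defs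
begin

lemma sum_lessThan_mult_nat:
  fixes g :: "nat \<Rightarrow> 'a::comm_monoid_add"
  shows "(\<Sum>k<b * d. g k) = (\<Sum>u<b. \<Sum>v<d. g (u * d + v))"
  using sum.nat_group[of g d b, symmetric]
  by (simp add: sum.shift_bounds_nat_ivl[of g 0 "u*d" d for u, simplified, symmetric]
      add.commute lessThan_atLeast0 mult.commute)

lemma kron_carrier_mat [simp, intro]:
  "A \<in> carrier_mat a b \<Longrightarrow> B \<in> carrier_mat c d \<Longrightarrow> kron A B \<in> carrier_mat (a * c) (b * d)"
  unfolding kron_def carrier_mat_def by auto

lemma dim_kron [simp]:
  "dim_row (kron A B) = dim_row A * dim_row B" "dim_col (kron A B) = dim_col A * dim_col B"
  unfolding kron_def by auto

lemma index_kron [simp]: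
  "i < dim_row A * dim_row B \<Longrightarrow> j < dim_col A * dim_col B \<Longrightarrow>
   kron A B $$ (i, j)
     = A $$ (i div dim_row B, j div dim_col B) * B $$ (i mod dim_row B, j mod dim_col B)"
  unfolding kron_def by auto

lemma kron_mult:
  assumes A: "A \<in> carrier_mat a b" and B: "B \<in> carrier_mat c d"
    and C: "C \<in> carrier_mat b e" and D: "D \<in> carrier_mat d f"
  shows "kron A B * kron C D = kron (A * C) (B * D)"
proof (rule eq_matI)
  fix i j assume "i < dim_row (kron (A * C) (B * D))" and "j < dim_col (kron (A * C) (B * D))"
  then have i: "i < a * c" and j: "j < e * f" using A B C D by auto
  then have "c > 0" "f > 0" by (auto intro: ccontr)
  then have ij: "i div c < a" "i mod c < c" "j div f < e" "j mod f < f"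
    using i j by (auto simp: less_mult_imp_div_less)
  have block: "u * d + v < b * d" if "u < b" "v < d" for u v
  proof -
    have "u * d + v < (u + 1) * d" using that by simp
    also have "\<dots> \<le> b * d" using that by (intro mult_right_mono) auto
    finally show ?thesis .
  qed
  have "(kron A B * kron C D) $$ (i, j) = (\<Sum>k<b * d. kron A B $$ (i, k) * kron C D $$ (k, j))"
    using A B C D i j by (simp add: scalar_prod_def lessThan_atLeast0)
  also have "\<dots> = (\<Sum>u<b. \<Sum>v<d.
      (A $$ (i div c, u) * C $$ (u, j div f)) * (B $$ (i mod c, v) * D $$ (v, j mod f)))"
    unfolding sum_lessThan_mult_nat using A B C D i j block by (intro sum.cong refl) auto
  also have "\<dots> = (\<Sum>u<b. A $$ (i div c, u) * C $$ (u, j div f))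
      * (\<Sum>v<d. B $$ (i mod c, v) * D $$ (v, j mod f))"
    by (simp add: sum_product)
  also have "\<dots> = kron (A * C) (B * D) $$ (i, j)"
    using A B C D i j ij by (simp add: scalar_prod_def lessThan_atLeast0)
  finally show "(kron A B * kron C D) $$ (i, j) = kron (A * C) (B * D) $$ (i, j)" .
qed (use A B C D in auto)

lemma kron_mult_mult:
  assumes "A \<in> carrier_mat a b" "B \<in> carrier_mat c d" "C \<in> carrier_mat b e"
    "D \<in> carrier_mat d f" "E \<in> carrier_mat e g" "F \<in> carrier_mat f h"
  shows "kron A B * kron C D * kron E F = kron (A * C * E) (B * D * F)"
  using assms by (simp add: kron_mult[of A a b B c d C e D f] kron_mult[of "A * C" a e "B * D" c f E g F h])

lemma kron_one_mat_right [simp]: "kron A (1\<^sub>m 1) = A"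
  by (rule eq_matI) auto

lemma kron_one_mat [simp]: "kron (1\<^sub>m a) (1\<^sub>m b) = 1\<^sub>m (a * b)"
proof (rule eq_matI)
  fix i j assume i: "i < dim_row (1\<^sub>m (a * b))" and j: "j < dim_col (1\<^sub>m (a * b) :: real mat)"
  then have "b > 0" by (auto intro: ccontr)
  moreover have "(i div b = j div b \<and> i mod b = j mod b) = (i = j)"
    by (metis div_mult_mod_eq)
  ultimately show "kron (1\<^sub>m a) (1\<^sub>m b) $$ (i, j) = 1\<^sub>m (a * b) $$ (i, j)"
    using i j by (auto simp: less_mult_imp_div_less)
qed auto

lemma transpose_kron: "transpose_mat (kron A B) = kron (transpose_mat A) (transpose_mat B)"
proof (rule eq_matI)
  fix i j assume "i < dim_row (kron (transpose_mat A) (transpose_mat B))"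
    and "j < dim_col (kron (transpose_mat A) (transpose_mat B))"
  moreover from this have "dim_row B > 0" "dim_col B > 0" by (auto intro: ccontr)
  ultimately show "transpose_mat (kron A B) $$ (i, j) = kron (transpose_mat A) (transpose_mat B) $$ (i, j)"
    by (simp add: less_mult_imp_div_less)
qed auto

lemma kron_isometry:
  assumes Q: "Q \<in> carrier_mat m k" and QtQ: "transpose_mat Q * Q = 1\<^sub>m k"
  shows "transpose_mat (kron Q (1\<^sub>m p)) * kron Q (1\<^sub>m p) = 1\<^sub>m (k * p)"
  using Q by (simp add: transpose_kron kron_mult[of _ k m _ p p _ k _ p] QtQ)

lemma colm_carrier_mat [simp, intro]: "v \<in> carrier_vec p \<Longrightarrow> colm v \<in> carrier_mat p 1"
  unfolding colm_def by auto

lemma rowm_carrier_mat [simp, intro]: "v \<in> carrier_vec p \<Longrightarrow> rowm v \<in> carrier_mat 1 p"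
  unfolding rowm_def by auto

lemma dim_msum [simp]: "dim_row (msum nr nc f I) = nr" "dim_col (msum nr nc f I) = nc"
  unfolding msum_def by auto

lemma msum_carrier_mat [simp, intro]: "msum nr nc f I \<in> carrier_mat nr nc"
  by (simp add: carrier_matI)

lemma msum_cong: "(\<And>l. l \<in> I \<Longrightarrow> f l = g l) \<Longrightarrow> msum nr nc f I = msum nr nc g I"
  unfolding msum_def by (auto intro!: sum.cong)

lemma mult_msum:
  assumes A: "A \<in> carrier_mat m nr" and f: "\<And>l. l \<in> I \<Longrightarrow> f l \<in> carrier_mat nr nc"
  shows "A * msum nr nc f I = msum m nc (\<lambda>l. A * f l) I"
proof (rule eq_matI)
  fix i j assume "i < dim_row (msum m nc (\<lambda>l. A * f l) I)" "j < dim_col (msum m nc (\<lambda>l. A * f l) I)"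
  then have i: "i < m" and j: "j < nc" by auto
  have "(A * msum nr nc f I) $$ (i, j) = (\<Sum>k<nr. A $$ (i, k) * (\<Sum>l\<in>I. f l $$ (k, j)))"
    using A i j by (simp add: msum_def scalar_prod_def lessThan_atLeast0)
  also have "\<dots> = (\<Sum>l\<in>I. \<Sum>k<nr. A $$ (i, k) * f l $$ (k, j))"
    by (simp add: sum_distrib_left sum.swap[of _ I])
  also have "\<dots> = msum m nc (\<lambda>l. A * f l) I $$ (i, j)"
    using A i j by (auto simp: msum_def scalar_prod_def lessThan_atLeast0 intro!: sum.cong dest!: f)
  finally show "(A * msum nr nc f I) $$ (i, j) = msum m nc (\<lambda>l. A * f l) I $$ (i, j)" .
qed (use A in auto)

lemma msum_mult:
  assumes A: "A \<in> carrier_mat nc m" and f: "\<And>l. l \<in> I \<Longrightarrow> f l \<in> carrier_mat nr nc"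
  shows "msum nr nc f I * A = msum nr m (\<lambda>l. f l * A) I"
proof (rule eq_matI)
  fix i j assume "i < dim_row (msum nr m (\<lambda>l. f l * A) I)" "j < dim_col (msum nr m (\<lambda>l. f l * A) I)"
  then have i: "i < nr" and j: "j < m" by auto
  have "(msum nr nc f I * A) $$ (i, j) = (\<Sum>k<nc. (\<Sum>l\<in>I. f l $$ (i, k)) * A $$ (k, j))"
    using A i j by (simp add: msum_def scalar_prod_def lessThan_atLeast0)
  also have "\<dots> = (\<Sum>l\<in>I. \<Sum>k<nc. f l $$ (i, k) * A $$ (k, j))"
    by (simp add: sum_distrib_right sum.swap[of _ I])
  also have "\<dots> = msum nr m (\<lambda>l. f l * A) I $$ (i, j)"
    using A i j by (auto simp: msum_def scalar_prod_def lessThan_atLeast0 intro!: sum.cong dest!: f)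
  finally show "(msum nr nc f I * A) $$ (i, j) = msum nr m (\<lambda>l. f l * A) I $$ (i, j)" .
qed (use A in auto)

definition penrose_conditions :: "real mat \<Rightarrow> real mat \<Rightarrow> bool" where
  "penrose_conditions A X \<longleftrightarrow> X \<in> carrier_mat (dim_col A) (dim_row A) \<and> A * X * A = A \<and> X * A * X = X
     \<and> transpose_mat (A * X) = A * X \<and> transpose_mat (X * A) = X * A"

lemma penrose_conditions_unique:
  assumes A: "A \<in> carrier_mat m k"
    and X: "penrose_conditions A X" and Y: "penrose_conditions A Y"
  shows "X = Y"
proof -
  from X A have Xc: "X \<in> carrier_mat k m" and AXA: "A * (X * A) = A" and XAX: "X * A * X = X"
    and AX: "transpose_mat X * transpose_mat A = A * X" and XA: "transpose_mat A * transpose_mat X = X * A"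
    unfolding penrose_conditions_def by (auto simp: transpose_mult)
  from Y A have Yc: "Y \<in> carrier_mat k m" and AYA: "A * Y * A = A" and YAY: "Y * A * Y = Y"
    and AY: "transpose_mat Y * transpose_mat A = A * Y" and YA: "transpose_mat A * transpose_mat Y = Y * A"
    unfolding penrose_conditions_def by (auto simp: transpose_mult)
  have At: "transpose_mat A \<in> carrier_mat k m" and Xt: "transpose_mat X \<in> carrier_mat m k"
    and Yt: "transpose_mat Y \<in> carrier_mat m k" and XAc: "X * A \<in> carrier_mat k k"
    and YAc: "Y * A \<in> carrier_mat k k" and AXc: "A * X \<in> carrier_mat m m"
    and AYc: "A * Y \<in> carrier_mat m m"
    using A Xc Yc by auto
  have AtAY: "transpose_mat A * (A * Y) = transpose_mat A"
  proof -
    have "transpose_mat A * (A * Y) = transpose_mat ((A * Y) * A)"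
      by (simp only: transpose_mult[OF AYc A] transpose_mult[OF A Yc] AY)
    then show ?thesis using AYA by simp
  qed
  have XAAt: "X * A * transpose_mat A = transpose_mat A"
  proof -
    have "X * A * transpose_mat A = transpose_mat (A * (X * A))"
      by (simp only: transpose_mult[OF A XAc] transpose_mult[OF Xc A] XA)
    then show ?thesis using AXA by simp
  qed
  have "X = X * (transpose_mat X * transpose_mat A)"
    by (simp only: AX assoc_mult_mat[OF Xc A Xc, symmetric] XAX)
  also have "\<dots> = X * (transpose_mat X * (transpose_mat A * (A * Y)))" by (simp only: AtAY)
  also have "\<dots> = X * (A * X) * (A * Y)"
    by (simp only: assoc_mult_mat[OF Xt At AYc, symmetric] AX assoc_mult_mat[OF Xc AXc AYc, symmetric])
  also have "\<dots> = X * A * Y"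
    by (simp only: assoc_mult_mat[OF Xc A Xc, symmetric] XAX assoc_mult_mat[OF Xc A Yc])
  finally have X_eq: "X = X * A * Y" .
  have "Y = transpose_mat A * transpose_mat Y * Y" by (simp only: YA YAY)
  also have "\<dots> = X * A * (transpose_mat A * transpose_mat Y) * Y"
    by (simp only: assoc_mult_mat[OF XAc At Yt, symmetric] XAAt)
  also have "\<dots> = X * A * Y" by (simp only: YA assoc_mult_mat[OF XAc YAc Yc] YAY)
  finally show ?thesis using X_eq by simp
qed

lemma pinv_eqI:
  assumes A: "A \<in> carrier_mat m k" and X: "penrose_conditions A X"
  shows "pinv A = X"
proof -
  have "pinv A = (THE X. penrose_conditions A X)"
    unfolding pinv_def penrose_conditions_def by (rule refl)
  also have "\<dots> = X" using X penrose_conditions_unique[OF A _ X] by (rule the_equality)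
  finally show ?thesis .
qed

lemma pinv_conj_isometry:
  assumes P: "P \<in> carrier_mat m k" and PtP: "transpose_mat P * P = 1\<^sub>m k"
    and M: "M \<in> carrier_mat k k" and Mi: "Mi \<in> carrier_mat k k"
    and M_Mi: "M * Mi = 1\<^sub>m k" and Mi_M: "Mi * M = 1\<^sub>m k"
  shows "pinv (P * M * transpose_mat P) = P * Mi * transpose_mat P"
proof (rule pinv_eqI)
  have cancel: "transpose_mat P * (P * Z) = Z" if "Z \<in> carrier_mat k n" for Z n
    using that P by (simp flip: assoc_mult_mat[OF _ P that] add: PtP)
  have conj_mult: "P * A * transpose_mat P * (P * B * transpose_mat P) = P * (A * B) * transpose_mat P"
    if A: "A \<in> carrier_mat k k" and B: "B \<in> carrier_mat k k" for A B
  proof -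
    have Pt: "transpose_mat P \<in> carrier_mat k m" and PA: "P * A \<in> carrier_mat m k"
      and BPt: "B * transpose_mat P \<in> carrier_mat k m" and PBPt: "P * (B * transpose_mat P) \<in> carrier_mat m m"
      using A B P by auto
    show ?thesis
      by (simp only: assoc_mult_mat[OF P B Pt] assoc_mult_mat[OF PA Pt PBPt] cancel[OF BPt]
          assoc_mult_mat[OF PA B Pt, symmetric] assoc_mult_mat[OF P A B])
  qed
  have PPt_sym: "transpose_mat (P * 1\<^sub>m k * transpose_mat P) = P * 1\<^sub>m k * transpose_mat P"
    using P by (simp add: transpose_mult)
  show "penrose_conditions (P * M * transpose_mat P) (P * Mi * transpose_mat P)"
    unfolding penrose_conditions_def
    using conj_mult[OF M Mi] conj_mult[OF Mi M] conj_mult[OF one_carrier_mat M]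
      conj_mult[OF one_carrier_mat Mi] M Mi P PPt_sym by (simp add: M_Mi Mi_M)
  show "P * M * transpose_mat P \<in> carrier_mat m m" using P M by simp
qed

lemma centering_mult:
  fixes H :: "real mat"
  assumes H: "H \<in> carrier_mat N nc" and col_sums: "\<And>j. j < nc \<Longrightarrow> (\<Sum>i<N. H $$ (i, j)) = 0"
  shows "(1\<^sub>m N - c \<cdot>\<^sub>m mat N N (\<lambda>_. 1)) * H = H"
proof (rule eq_matI)
  fix i j assume i: "i < dim_row H" and j: "j < dim_col H"
  have "((1\<^sub>m N - c \<cdot>\<^sub>m mat N N (\<lambda>_. 1)) * H) $$ (i, j)
      = (\<Sum>k<N. (if i = k then H $$ (k, j) else 0) - c * H $$ (k, j))"
    using H i j by (auto simp: scalar_prod_def lessThan_atLeast0 algebra_simps intro!: sum.cong)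
  also have "\<dots> = H $$ (i, j) - c * (\<Sum>k<N. H $$ (k, j))"
    using H i by (simp add: sum_subtractf sum_distrib_left)
  finally show "((1\<^sub>m N - c \<cdot>\<^sub>m mat N N (\<lambda>_. 1)) * H) $$ (i, j) = H $$ (i, j)"
    using H j col_sums by simp
qed (use H in auto)

lemma mult_centering:
  fixes H :: "real mat"
  assumes H: "H \<in> carrier_mat nr N" and row_sums: "\<And>i. i < nr \<Longrightarrow> (\<Sum>j<N. H $$ (i, j)) = 0"
  shows "H * (1\<^sub>m N - c \<cdot>\<^sub>m mat N N (\<lambda>_. 1)) = H"
proof (rule eq_matI)
  fix i j assume i: "i < dim_row H" and j: "j < dim_col H"
  have "(H * (1\<^sub>m N - c \<cdot>\<^sub>m mat N N (\<lambda>_. 1))) $$ (i, j)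
      = (\<Sum>k<N. (if k = j then H $$ (i, k) else 0) - c * H $$ (i, k))"
    using H i j by (auto simp: scalar_prod_def lessThan_atLeast0 algebra_simps intro!: sum.cong)
  also have "\<dots> = H $$ (i, j) - c * (\<Sum>k<N. H $$ (i, k))"
    using H j by (simp add: sum_subtractf sum_distrib_left)
  finally show "(H * (1\<^sub>m N - c \<cdot>\<^sub>m mat N N (\<lambda>_. 1))) $$ (i, j) = H $$ (i, j)"
    using H i row_sums by simp
qed (use H in auto)

lemma sum_phat:
  assumes "dim_col B > 0"
  shows "(\<Sum>k<dim_col B. phat B x k) = 1"
proof -
  have "(\<Sum>k<dim_col B. exp (x \<bullet> col B k)) > 0"
    using assms by (intro sum_pos) auto
  then show ?thesis unfolding phat_def by (simp add: sum_divide_distrib[symmetric])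
qed

lemma Hsf_carrier_mat [simp, intro]: "Hsf B x \<in> carrier_mat (dim_col B) (dim_col B)"
  unfolding Hsf_def by auto

lemma Hsf_col_sum: "b < dim_col B \<Longrightarrow> (\<Sum>a<dim_col B. Hsf B x $$ (a, b)) = 0"
  unfolding Hsf_def by (simp add: sum_subtractf sum.distrib sum_distrib_right[symmetric] sum_phat)

lemma Hsf_row_sum: "a < dim_col B \<Longrightarrow> (\<Sum>b<dim_col B. Hsf B x $$ (a, b)) = 0"
  unfolding Hsf_def by (simp add: sum_subtractf sum.distrib sum_distrib_left[symmetric] sum_phat)

lemma centering_Hsf:
  assumes "dim_col B = N"
  shows "(1\<^sub>m N - c \<cdot>\<^sub>m mat N N (\<lambda>_. 1)) * Hsf B x = Hsf B x"
    and "Hsf B x * (1\<^sub>m N - c \<cdot>\<^sub>m mat N N (\<lambda>_. 1)) = Hsf B x"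
  using assms Hsf_carrier_mat[of B x]
  by (auto intro: centering_mult mult_centering Hsf_col_sum Hsf_row_sum)

lemma invertible_mat_obtain_mat_inverse:
  fixes M :: "real mat"
  assumes M: "M \<in> carrier_mat N N" and "invertible_mat M"
  obtains Mi where "mat_inverse M = Some Mi" "Mi \<in> carrier_mat N N" "M * Mi = 1\<^sub>m N" "Mi * M = 1\<^sub>m N"
proof -
  from assms obtain B where MB: "M * B = 1\<^sub>m N" and BM: "B * M = 1\<^sub>m (dim_row B)"
    unfolding invertible_mat_def inverts_mat_def by auto
  then have "B \<in> carrier_mat N N"
    using M by (metis carrier_matD(2) carrier_matI index_mult_mat(3) index_one_mat(3))
  then have "M \<in> Units (ring_mat TYPE(real) N ())"
    using M MB BM unfolding Units_def ring_mat_def by auto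
  then obtain Mi where "mat_inverse M = Some Mi"
    using mat_inverse(1)[OF M] by (metis option.exhaust)
  then show ?thesis using mat_inverse(2)[OF M] that by auto
qed

lemma regroup_mult_mat:
  fixes Qt R P G Pt C Q :: "real mat"
  assumes Qt: "Qt \<in> carrier_mat k a" and R: "R \<in> carrier_mat a n" and P: "P \<in> carrier_mat n m"
    and G: "G \<in> carrier_mat m m" and Pt: "Pt \<in> carrier_mat m n" and C: "C \<in> carrier_mat n a"
    and Q: "Q \<in> carrier_mat a k"
  shows "Qt * (R * (P * G * Pt) * C) * Q = Qt * R * P * G * (Pt * C * Q)"
proof -
  have PG: "P * G \<in> carrier_mat n m" and X: "P * G * Pt \<in> carrier_mat n n"
    and RX: "R * (P * G * Pt) \<in> carrier_mat a n" and RXC: "R * (P * G * Pt) * C \<in> carrier_mat a a"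
    and CQ: "C * Q \<in> carrier_mat n k" and Y: "Pt * (C * Q) \<in> carrier_mat m k"
    and GY: "G * (Pt * (C * Q)) \<in> carrier_mat m k" and PGY: "P * (G * (Pt * (C * Q))) \<in> carrier_mat n k"
    and QtR: "Qt * R \<in> carrier_mat k n" and QtRP: "Qt * R * P \<in> carrier_mat k m"
    using assms by auto
  have "Qt * (R * (P * G * Pt) * C) * Q = Qt * (R * (P * (G * (Pt * (C * Q)))))"
    by (simp only: assoc_mult_mat[OF Qt RXC Q] assoc_mult_mat[OF RX C Q] assoc_mult_mat[OF R X CQ]
        assoc_mult_mat[OF PG Pt CQ] assoc_mult_mat[OF P G Y])
  also have "\<dots> = Qt * R * P * G * (Pt * C * Q)"
    by (simp only: assoc_mult_mat[OF Pt C Q] assoc_mult_mat[OF QtRP G Y] assoc_mult_mat[OF QtR P GY]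
        assoc_mult_mat[OF Qt R PGY])
  finally show ?thesis .
qed

lemma lift_compression:
  fixes Q H :: "real mat"
  assumes Q: "Q \<in> carrier_mat m k" and H: "H \<in> carrier_mat m m"
    and left: "Q * transpose_mat Q * H = H" and right: "H * (Q * transpose_mat Q) = H"
  shows "Q * (transpose_mat Q * H * Q) * transpose_mat Q = H"
proof -
  have Qt: "transpose_mat Q \<in> carrier_mat k m" and QtH: "transpose_mat Q * H \<in> carrier_mat k m"
    and QQtH: "Q * transpose_mat Q * H \<in> carrier_mat m m"
    using Q H by auto
  have "Q * (transpose_mat Q * H * Q) * transpose_mat Q = Q * transpose_mat Q * H * (Q * transpose_mat Q)"
    by (simp only: assoc_mult_mat[OF Q QtH Q, symmetric] assoc_mult_mat[OF Q Qt H, symmetric]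
        assoc_mult_mat[OF QQtH Q Qt])
  then show ?thesis by (simp only: left right)
qed

(* V_i and the sans-serif V_i are kron_schur applied to the inverse, resp. the pseudo-inverse,
   of the corresponding kron_gram. *)
definition kron_gram ::
  "nat \<Rightarrow> nat \<Rightarrow> (nat \<Rightarrow> real mat) \<Rightarrow> (nat \<Rightarrow> real vec) \<Rightarrow> nat set \<Rightarrow> real mat" where
  "kron_gram d p H x I = msum (d * p) (d * p) (\<lambda>l. kron (H l) (colm (x l) * rowm (x l))) I"

lemma kron_gram_carrier_mat [simp]: "kron_gram d p H x I \<in> carrier_mat (d * p) (d * p)"
  unfolding kron_gram_def by simp

definition kron_schur :: "real mat \<Rightarrow> real mat \<Rightarrow> real vec \<Rightarrow> real mat" where
  "kron_schur G H v = H - kron H (rowm v) * G * kron H (colm v)"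

lemma kron_gram_conj:
  assumes Q: "Q \<in> carrier_mat m k" and H: "\<And>l. l \<in> I \<Longrightarrow> H l \<in> carrier_mat k k"
    and x: "\<And>l. l \<in> I \<Longrightarrow> x l \<in> carrier_vec p"
  shows "kron Q (1\<^sub>m p) * kron_gram k p H x I * transpose_mat (kron Q (1\<^sub>m p))
       = kron_gram m p (\<lambda>l. Q * H l * transpose_mat Q) x I"
proof -
  define P where "P = kron Q (1\<^sub>m p)"
  define xx where "xx l = colm (x l) * rowm (x l)" for l
  have P: "P \<in> carrier_mat (m * p) (k * p)" and Pt: "transpose_mat P \<in> carrier_mat (k * p) (m * p)"
    unfolding P_def using Q by auto
  have xx: "xx l \<in> carrier_mat p p" if "l \<in> I" for l
    unfolding xx_def using x[OF that] by (auto intro!: mult_carrier_mat)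
  have "P * kron_gram k p H x I * transpose_mat P
      = msum (m * p) (m * p) (\<lambda>l. P * kron (H l) (xx l) * transpose_mat P) I"
    unfolding kron_gram_def xx_def[symmetric]
    using P Pt H xx by (simp add: mult_msum[OF P] msum_mult[OF Pt])
  also have "\<dots> = msum (m * p) (m * p) (\<lambda>l. kron (Q * H l * transpose_mat Q) (xx l)) I"
  proof (rule msum_cong)
    fix l assume l: "l \<in> I"
    show "P * kron (H l) (xx l) * transpose_mat P = kron (Q * H l * transpose_mat Q) (xx l)"
      using kron_mult_mult[OF Q one_carrier_mat H[OF l] xx[OF l] transpose_carrier_mat[THEN iffD2, OF Q]
          one_carrier_mat] xx[OF l]
      unfolding P_def transpose_kron by simp
  qed
  finally show ?thesis unfolding P_def kron_gram_def xx_def .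
qed

lemma kron_compress_rowm:
  assumes "A \<in> carrier_mat k m" "B \<in> carrier_mat m m" "C \<in> carrier_mat m k'" "v \<in> carrier_vec p"
  shows "A * kron B (rowm v) * kron C (1\<^sub>m p) = kron (A * B * C) (rowm v)"
  using kron_mult_mult[OF assms(1) one_carrier_mat assms(2) rowm_carrier_mat[OF assms(4)]
      assms(3) one_carrier_mat, unfolded kron_one_mat_right] assms rowm_carrier_mat[OF assms(4)] by simp

lemma kron_compress_colm:
  assumes "A \<in> carrier_mat k m" "B \<in> carrier_mat m m" "C \<in> carrier_mat m k'" "v \<in> carrier_vec p"
  shows "kron A (1\<^sub>m p) * kron B (colm v) * C = kron (A * B * C) (colm v)"
  using kron_mult_mult[OF assms(1) one_carrier_mat assms(2) colm_carrier_mat[OF assms(4)]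
      assms(3) one_carrier_mat, unfolded kron_one_mat_right] assms colm_carrier_mat[OF assms(4)] by simp

lemma compress_kron_schur:
  fixes Qt Hs P G Pt Q :: "real mat"
  assumes Qt: "Qt \<in> carrier_mat k m" and Hs: "Hs \<in> carrier_mat m m" and Q: "Q \<in> carrier_mat m k"
    and v: "v \<in> carrier_vec p" and P: "P \<in> carrier_mat (m * p) n" and G: "G \<in> carrier_mat n n"
    and Pt: "Pt \<in> carrier_mat n (m * p)"
    and row: "Qt * kron Hs (rowm v) * P = kron (Qt * Hs * Q) (rowm v)"
    and col: "Pt * kron Hs (colm v) * Q = kron (Qt * Hs * Q) (colm v)"
  shows "Qt * kron_schur (P * G * Pt) Hs v * Q = kron_schur G (Qt * Hs * Q) v"
proof -
  have R: "kron Hs (rowm v) \<in> carrier_mat m (m * p)"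
    using kron_carrier_mat[OF Hs rowm_carrier_mat[OF v]] by simp
  have C: "kron Hs (colm v) \<in> carrier_mat (m * p) m"
    using kron_carrier_mat[OF Hs colm_carrier_mat[OF v]] by simp
  have RXC: "kron Hs (rowm v) * (P * G * Pt) * kron Hs (colm v) \<in> carrier_mat m m"
    using R C P G Pt by (meson mult_carrier_mat)
  have "Qt * kron_schur (P * G * Pt) Hs v * Q
      = Qt * Hs * Q - Qt * (kron Hs (rowm v) * (P * G * Pt) * kron Hs (colm v)) * Q"
    unfolding kron_schur_def
    by (simp only: mult_minus_distrib_mat[OF Qt Hs RXC]
        minus_mult_distrib_mat[OF mult_carrier_mat[OF Qt Hs] mult_carrier_mat[OF Qt RXC] Q])
  also have "\<dots> = Qt * Hs * Q - Qt * kron Hs (rowm v) * P * G * (Pt * kron Hs (colm v) * Q)"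
    by (simp only: regroup_mult_mat[OF Qt R P G Pt C Q])
  finally show ?thesis unfolding row col kron_schur_def .
qed

lemma kron_schur_conj_isometry:
  fixes Q :: "real mat" and Hs :: "nat \<Rightarrow> real mat" and x :: "nat \<Rightarrow> real vec"
  assumes Q: "Q \<in> carrier_mat m k" and QtQ: "transpose_mat Q * Q = 1\<^sub>m k"
    and Hs: "\<And>l. l \<in> I \<Longrightarrow> Hs l \<in> carrier_mat m m"
    and lift: "\<And>l. l \<in> I \<Longrightarrow> Q * (transpose_mat Q * Hs l * Q) * transpose_mat Q = Hs l"
    and x: "\<And>l. l \<in> I \<Longrightarrow> x l \<in> carrier_vec p"
    and inv: "invertible_mat (kron_gram k p (\<lambda>l. transpose_mat Q * Hs l * Q) x I)"
    and i: "i \<in> I"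
  shows "kron_schur (the (mat_inverse (kron_gram k p (\<lambda>l. transpose_mat Q * Hs l * Q) x I)))
           (transpose_mat Q * Hs i * Q) (x i)
       = transpose_mat Q * kron_schur (pinv (kron_gram m p Hs x I)) (Hs i) (x i) * Q"
proof -
  define M where "M = kron_gram k p (\<lambda>l. transpose_mat Q * Hs l * Q) x I"
  define P where "P = kron Q (1\<^sub>m p)"
  have Qt: "transpose_mat Q \<in> carrier_mat k m" using Q by simp
  have P: "P \<in> carrier_mat (m * p) (k * p)" and Pt: "transpose_mat P \<in> carrier_mat (k * p) (m * p)"
    unfolding P_def using Q by auto
  obtain Mi where Mi: "mat_inverse M = Some Mi" "Mi \<in> carrier_mat (k * p) (k * p)"
      "M * Mi = 1\<^sub>m (k * p)" "Mi * M = 1\<^sub>m (k * p)"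
    using invertible_mat_obtain_mat_inverse[of M "k * p"] inv unfolding M_def by auto
  have "P * M * transpose_mat P = kron_gram m p (\<lambda>l. Q * (transpose_mat Q * Hs l * Q) * transpose_mat Q) x I"
    unfolding M_def P_def using Q Hs by (intro kron_gram_conj[OF Q _ x]) auto
  also have "\<dots> = kron_gram m p Hs x I"
    unfolding kron_gram_def by (intro msum_cong) (simp add: lift)
  finally have pinv: "pinv (kron_gram m p Hs x I) = P * Mi * transpose_mat P"
    using pinv_conj_isometry[OF P kron_isometry[OF Q QtQ, of p, folded P_def] _ Mi(2-4)]
    unfolding M_def by auto
  have "transpose_mat Q * kron_schur (P * Mi * transpose_mat P) (Hs i) (x i) * Q
      = kron_schur Mi (transpose_mat Q * Hs i * Q) (x i)"
    using Q Qt Hs[OF i] x[OF i]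
    by (intro compress_kron_schur[OF Qt Hs[OF i] Q x[OF i] P Mi(2) Pt])
      (simp_all add: P_def transpose_kron kron_compress_rowm kron_compress_colm)
  then show ?thesis
    using Mi(1) unfolding pinv M_def by simp
qed

theorem lemmaS3p2:
  fixes K n p :: nat and Q Bh :: "real mat" and x y :: "nat \<Rightarrow> real vec"
  assumes K: "K \<ge> 1"
    and Q: "Q \<in> carrier_mat (K+1) K"
    and QQt: "Q * transpose_mat Q = 1\<^sub>m (K+1) - (1 / real (K+1)) \<cdot>\<^sub>m mat (K+1) (K+1) (\<lambda>_. 1)"
    and QtQ: "transpose_mat Q * Q = 1\<^sub>m K"
    and x: "\<And>i. i < n \<Longrightarrow> x i \<in> carrier_vec p"
    and y: "\<And>i. i < n \<Longrightarrow> y i \<in> carrier_vec (K+1)"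
    and Bh: "Bh \<in> carrier_mat p (K+1)"
    and minimizer: "\<And>B. B \<in> carrier_mat p (K+1) \<Longrightarrow>
        (\<Sum>i<n. mlloss (y i) (transpose_mat Bh *\<^sub>v x i)) \<le> (\<Sum>i<n. mlloss (y i) (transpose_mat B *\<^sub>v x i))"
    and inv: "invertible_mat (msum (K * p) (K * p)
                 (\<lambda>l. kron (transpose_mat Q * Hsf Bh (x l) * Q) (colm (x l) * rowm (x l))) {..<n})"
  shows "\<forall>i<n.
    (let H = (\<lambda>l. transpose_mat Q * Hsf Bh (x l) * Q);
         Hs = (\<lambda>l. Hsf Bh (x l));
         V = H i - kron (H i) (rowm (x i))
               * the (mat_inverse (msum (K * p) (K * p) (\<lambda>l. kron (H l) (colm (x l) * rowm (x l))) {..<n}))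
               * kron (H i) (colm (x i));
         Vs = Hs i - kron (Hs i) (rowm (x i))
               * pinv (msum ((K+1) * p) ((K+1) * p) (\<lambda>l. kron (Hs l) (colm (x l) * rowm (x l))) {..<n})
               * kron (Hs i) (colm (x i))
     in V = transpose_mat Q * Vs * Q)"
proof -
  have dim_Bh: "dim_col Bh = K + 1" using Bh by simp
  have Hs: "Hsf Bh (x l) \<in> carrier_mat (K + 1) (K + 1)" for l
    using Hsf_carrier_mat[of Bh] dim_Bh by simp
  have lift: "Q * (transpose_mat Q * Hsf Bh (x l) * Q) * transpose_mat Q = Hsf Bh (x l)" for l
    using lift_compression[OF Q Hs] centering_Hsf[OF dim_Bh] unfolding QQt by simp
  show ?thesis
    using kron_schur_conj_isometry[OF Q QtQ Hs lift x inv[folded kron_gram_def]]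
    unfolding kron_schur_def kron_gram_def Let_def by simp
qed

end
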